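(* Let $n,s$ be integers with $s \geq n \geq 1$, and consider the following game played with $n$ dice, each having $s$ equally likely faces numbered $1,\dots,s$. At each turn, if $k \geq 1$ dice remain in play, all $k$ of them are rolled and every die showing the value $k$ is removed from play; the game ends when no dice remain. For a game that ends after finitely many turns, its signature is the sequence of $n$ numbers recording, for each die, the value it showed on the roll at which it was removed, listed in the order in which the dice were removed (dice removed on the same turn all show the same value, so their relative order does not matter). Then the number of distinct signatures that can arise from finite games is $2^{n-1}$.
   Context: A game is a (possibly infinite) sequence of turns as described; it is called finite if it consists of finitely many turns. The standing assumption $s \geq n$ guarantees that every value $k \in \{1,\dots,n\}$ is a face of each die. *)

theory Defs
  imports Main
begin

text \<open>Dice are labelled by natural numbers; a state is the (finite) set of dice
  still in play.\<close>

definition removed :: "nat set \<Rightarrow> (nat \<Rightarrow> nat) \<Rightarrow> nat set" where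
  "removed D f = {d \<in> D. f d = card D}"

fun is_finite_game :: "nat \<Rightarrow> nat set \<Rightarrow> (nat \<Rightarrow> nat) list \<Rightarrow> bool" where
  "is_finite_game s D [] = (D = {})"
| "is_finite_game s D (f # fs) =
     (D \<noteq> {} \<and> (\<forall>d\<in>D. f d \<in> {1..s}) \<and> is_finite_game s (D - removed D f) fs)"

fun signature :: "nat set \<Rightarrow> (nat \<Rightarrow> nat) list \<Rightarrow> nat list" where
  "signature D [] = []"
| "signature D (f # fs) =
     map f (sorted_list_of_set (removed D f)) @ signature (D - removed D f) fs"

end

theory Submission
  imports Defs
begin

text \<open>On a turn with k dice in play the removed dice all show k, so a signature of a
  game on k dice is a block of k - m copies of k followed by a signature of a game on
  the m < k remaining dice (turns removing nothing contribute nothing). Conversely,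
  since s \<ge> k, any nonempty set of dice can be made to show k while the others show
  a different face, so every list built from such blocks is a signature. These lists
  correspond to the compositions of k; their number c(k) satisfies
  c(k) = c(0) + ... + c(k-1) for k > 0, whence c(k) = 2^(k-1).\<close>

inductive admissible_signature :: "nat \<Rightarrow> nat list \<Rightarrow> bool" where
  Nil: "admissible_signature 0 []"
| block: "m < k \<Longrightarrow> admissible_signature m xs \<Longrightarrow>
    admissible_signature k (replicate (k - m) k @ xs)"

lemma signature_Cons:
  assumes "finite D"
  shows "signature D (f # fs) =
    replicate (card (removed D f)) (card D) @ signature (D - removed D f) fs"
proof -
  have "finite (removed D f)" using assms by (simp add: removed_def)
  then have "map f (sorted_list_of_set (removed D f)) =
      map (\<lambda>_. card D) (sorted_list_of_set (removed D f))"
    by (intro map_cong) (auto simp: removed_def)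
  then show ?thesis by (simp add: map_replicate_const)
qed

lemma is_finite_game_finite: "is_finite_game s D g \<Longrightarrow> finite D"
proof (induction g arbitrary: D)
  case (Cons f fs)
  then have faces: "\<forall>d\<in>D. 1 \<le> f d" and "finite (D - removed D f)"
    by auto
  show ?case
  proof (rule ccontr)
    assume "infinite D"
    \<comment> \<open>then card D = 0, a face no die can show\<close>
    with faces have "removed D f = {}" by (auto simp: removed_def)
    with \<open>finite (D - removed D f)\<close> \<open>infinite D\<close> show False by simp
  qed
qed simp

lemma admissible_signature_if_finite_game:
  "is_finite_game s D g \<Longrightarrow> admissible_signature (card D) (signature D g)"
proof (induction g arbitrary: D)
  case Nil
  then show ?case by (simp add: admissible_signature.Nil)
next
  case (Cons f fs)
  define R where "R = removed D f"
  have "finite D" using Cons.prems by (rule is_finite_game_finite)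
  have "R \<subseteq> D" by (auto simp: R_def removed_def)
  have IH: "admissible_signature (card (D - R)) (signature (D - R) fs)"
    using Cons by (simp add: R_def)
  have sig: "signature D (f # fs) = replicate (card R) (card D) @ signature (D - R) fs"
    unfolding R_def using \<open>finite D\<close> by (rule signature_Cons)
  show ?case
  proof (cases "R = {}")
    case True
    with sig IH show ?thesis by simp
  next
    case False
    with \<open>R \<subseteq> D\<close> have "D - R \<subset> D" by blast
    with \<open>finite D\<close> have "card (D - R) < card D" by (rule psubset_card_mono)
    moreover have "card R = card D - card (D - R)"
      using \<open>R \<subseteq> D\<close> \<open>finite D\<close>
      by (simp add: card_Diff_subset card_mono finite_subset diff_diff_cancel)
    ultimately show ?thesis
      using sig IH by (simp add: admissible_signature.block)
  qed
qed

lemma obtain_roll_removing: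
  assumes "finite D" "R \<subseteq> D" "R \<noteq> {}" "card D \<le> s"
  obtains f where "\<forall>d\<in>D. f d \<in> {1..s}" "removed D f = R"
proof
  define f where "f d = (if d \<in> R then card D else 1)" for d
  have "0 < card D"
    using assms by (auto simp: card_gt_0_iff)
  with assms show "\<forall>d\<in>D. f d \<in> {1..s}"
    by (simp add: f_def)
  have "d \<in> R" if "d \<in> D" "f d = card D" for d
  proof (rule ccontr)
    assume "d \<notin> R"
    with that have "card D = 1" by (simp add: f_def)
    then obtain e where "D = {e}" by (rule card_1_singletonE)
    with \<open>d \<in> D\<close> \<open>d \<notin> R\<close> \<open>R \<subseteq> D\<close> \<open>R \<noteq> {}\<close> show False by auto
  qed
  moreover have "f d = card D" if "d \<in> R" for d
    using that by (simp add: f_def)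
  ultimately show "removed D f = R"
    using \<open>R \<subseteq> D\<close> unfolding removed_def by blast
qed

lemma finite_game_if_admissible_signature:
  assumes "admissible_signature k xs" "finite D" "card D = k" "k \<le> s"
  shows "\<exists>g. is_finite_game s D g \<and> signature D g = xs"
  using assms
proof (induction k xs arbitrary: D rule: admissible_signature.induct)
  case Nil
  then have "is_finite_game s D [] \<and> signature D [] = []" by simp
  then show ?case by blast
next
  case (block m k xs)
  obtain R where "R \<subseteq> D" "card R = k - m"
    using obtain_subset_with_card_n[of "k - m" D] block.prems by auto
  with block.hyps(1) have "R \<noteq> {}" by auto
  have "card D \<le> s" using block.prems by simp
  then obtain f where faces: "\<forall>d\<in>D. f d \<in> {1..s}" and removed: "removed D f = R"
    by (rule obtain_roll_removing[OF block.prems(1) \<open>R \<subseteq> D\<close> \<open>R \<noteq> {}\<close>])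
  have "card (D - R) = m"
    using \<open>R \<subseteq> D\<close> \<open>card R = k - m\<close> block.prems block.hyps(1)
    by (simp add: card_Diff_subset finite_subset)
  then have "\<exists>g. is_finite_game s (D - R) g \<and> signature (D - R) g = xs"
    using block.prems block.hyps(1) by (intro block.IH) auto
  then obtain g where g: "is_finite_game s (D - R) g" "signature (D - R) g = xs"
    by blast
  have "is_finite_game s D (f # g)"
    using faces removed g(1) \<open>R \<noteq> {}\<close> \<open>R \<subseteq> D\<close> by auto
  moreover have "signature D (f # g) = replicate (k - m) k @ xs"
    using removed g(2) \<open>card R = k - m\<close> block.prems(2)
    by (subst signature_Cons[OF block.prems(1)]) simp
  ultimately show ?case by blast
qed

lemma signatures_of_finite_games:
  assumes "finite D" "card D \<le> s"
  shows "signature D ` {g. is_finite_game s D g} = {xs. admissible_signature (card D) xs}"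
  using admissible_signature_if_finite_game finite_game_if_admissible_signature[OF _ assms(1) refl assms(2)]
  by blast

lemma admissible_signature_length_set:
  "admissible_signature k xs \<Longrightarrow> length xs = k \<and> set xs \<subseteq> {..k}"
  by (induction rule: admissible_signature.induct) auto

lemma finite_admissible_signatures: "finite {xs. admissible_signature k xs}"
  by (rule finite_subset[OF _ finite_lists_length_eq[of "{..k}" k]])
    (auto dest: admissible_signature_length_set)

lemma replicate_append_eq_replicate_appendD:
  assumes "replicate i x @ xs = replicate j x @ ys" "x \<notin> set xs" "x \<notin> set ys"
  shows "i = j \<and> xs = ys"
  using assms
proof (induction i arbitrary: j)
  case 0
  then show ?case by (cases j) auto
next
  case (Suc i)
  then show ?case by (cases j) (auto simp: Cons_eq_append_conv)
qed

lemma admissible_signatures_block_decomposition: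
  assumes "0 < k"
  shows "{xs. admissible_signature k xs} =
    (\<Union>m<k. (@) (replicate (k - m) k) ` {xs. admissible_signature m xs})"
proof (intro set_eqI iffI)
  fix xs
  assume "xs \<in> {xs. admissible_signature k xs}"
  then have "admissible_signature k xs" by simp
  then show "xs \<in> (\<Union>m<k. (@) (replicate (k - m) k) ` {xs. admissible_signature m xs})"
    using assms by cases auto
qed (auto intro: admissible_signature.block)

lemma card_admissible_signatures_recurrence:
  assumes "0 < k"
  shows "card {xs. admissible_signature k xs} = (\<Sum>m<k. card {xs. admissible_signature m xs})"
proof -
  let ?B = "\<lambda>m. (@) (replicate (k - m) k) ` {xs. admissible_signature m xs}"
  have no_k: "k \<notin> set xs" if "admissible_signature m xs" "m < k" for m xs
    using admissible_signature_length_set[OF that(1)] that(2) by auto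
  have disjoint: "\<forall>m\<in>{..<k}. \<forall>m'\<in>{..<k}. m \<noteq> m' \<longrightarrow> ?B m \<inter> ?B m' = {}"
    by (fastforce dest: replicate_append_eq_replicate_appendD no_k)
  have "inj_on ((@) (replicate (k - m) k)) {xs. admissible_signature m xs}" for m
    by (simp add: inj_on_def)
  then have "card (?B m) = card {xs. admissible_signature m xs}" for m
    by (rule card_image)
  moreover have "card (\<Union>m<k. ?B m) = (\<Sum>m<k. card (?B m))"
    using disjoint by (intro card_UN_disjoint) (auto intro: finite_admissible_signatures)
  ultimately show ?thesis
    by (simp add: admissible_signatures_block_decomposition[OF assms])
qed

lemma card_admissible_signatures: "card {xs. admissible_signature (Suc k) xs} = 2 ^ k"
proof (induction k)
  case 0
  have "{xs. admissible_signature 0 xs} = {[]}"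
    by (auto elim: admissible_signature.cases intro: admissible_signature.Nil)
  then show ?case by (simp add: card_admissible_signatures_recurrence)
next
  case (Suc k)
  \<comment> \<open>the recurrence for Suc (Suc k) contains the one for Suc k as its tail\<close>
  have "card {xs. admissible_signature (Suc (Suc k)) xs} =
    card {xs. admissible_signature (Suc k) xs} + card {xs. admissible_signature (Suc k) xs}"
    by (simp add: card_admissible_signatures_recurrence[of "Suc (Suc k)"]
        card_admissible_signatures_recurrence[of "Suc k"])
  with Suc show ?case by simp
qed

theorem proposition2p7:
  fixes n s :: nat
  assumes "1 \<le> n" and "n \<le> s"
  shows "card (signature {0..<n} ` {g. is_finite_game s {0..<n} g}) = 2 ^ (n - 1)"
proof -
  have "signature {0..<n} ` {g. is_finite_game s {0..<n} g} = {xs. admissible_signature n xs}"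
    using signatures_of_finite_games[of "{0..<n}" s] assms by simp
  moreover have "n = Suc (n - 1)" using assms by simp
  ultimately show ?thesis
    by (metis card_admissible_signatures)
qed

end
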